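(* Let $1\le k<n$ and let $X$ be a fixed real $n\times k$ matrix of full column rank $k$. Let $\mathbf{F}_2^0$ be the class of all distributions $F$ of $Y=X\beta+e$ in $\mathbb{R}^n$, where $\beta$ ranges over $\mathbb{R}^k$ and the distribution of $e$ ranges over all distributions on $\mathbb{R}^n$ with $Ee=0$ and $Eee'=\sigma^2 I_n$ for some $0<\sigma^2<\infty$; write $\beta(F)$ for the corresponding $\beta$ and $e=Y-X\beta(F)$ for the error vector under $F$. Let $\hat\beta_{OLS}=(X'X)^{-1}X'Y$, let $H_1,\dots,H_k$ be symmetric real $n\times n$ matrices with $\operatorname{tr}(H_i)=0$ and $X'H_iX=0$ for $i=1,\dots,k$, and for $\alpha\in\mathbb{R}$ define $$\hat\beta_\alpha=\hat\beta_{OLS}+\alpha\,(Y'H_1Y,\dots,Y'H_kY)'.$$ Write $Q=(Y'H_1Y,\dots,Y'H_kY)'$. Then: (a) $E_F(\hat\beta_\alpha)=\beta(F)$ for all $F\in\mathbf{F}_2^0$ and all $\alpha\in\mathbb{R}$. (b) If $\operatorname{Cov}_F(c'\hat\beta_{OLS},c'Q)\neq 0$ for some $c\in\mathbb{R}^k$ and some $F\in\mathbf{F}_2^0$ under which $Y$ has finite fourth moments, then there exists $\alpha\in\mathbb{R}$ such that $\operatorname{Var}_F(c'\hat\beta_\alpha)<\operatorname{Var}_F(c'\hat\beta_{OLS})$. (c) For every $c\in\mathbb{R}^k$ and every $F\in\mathbf{F}_2^0$ with finite fourth moments and $\beta(F)=0$, $$\operatorname{Cov}_F(c'\hat\beta_{OLS},c'Q)=\sum_{j=1}^n\sum_{l=1}^n\sum_{m=1}^n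 d_j\Big(\sum_{i=1}^k c_i h_{lm}(i)\Big)E_F(e_je_le_m),$$ where $d=(d_1,\dots,d_n)'=X(X'X)^{-1}c$ and $h_{lm}(i)$ is the $(l,m)$-th entry of $H_i$. (d) For every $c\in\mathbb{R}^k$ and every $F\in\mathbf{F}_2^0$ with finite fourth moments under which $\beta(F)=0$ and the coordinates $e_1,\dots,e_n$ of $e$ are independent, $$\operatorname{Cov}_F(c'\hat\beta_{OLS},c'Q)=\sum_{j=1}^n d_j\Big(\sum_{i=1}^k c_i h_{jj}(i)\Big)E_F(e_j^3),$$ with $d$ and $h_{jj}(i)$ as in (c).
   Context: $E_F$, $\operatorname{Var}_F$, $\operatorname{Cov}_F$ denote expectation, variance and covariance when $Y$ has distribution $F$. *)

theory Defs
  imports "HOL-Probability.Probability"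
begin

text \<open>Design matrix X :: real^'k^'n (n rows, k columns). A distribution F of Y is a
probability measure M on the Borel sets of real^'n.\<close>

definition expect :: "('a measure) \<Rightarrow> ('a \<Rightarrow> real) \<Rightarrow> real" where
  "expect M f = (\<integral>y. f y \<partial>M)"

definition cov :: "('a measure) \<Rightarrow> ('a \<Rightarrow> real) \<Rightarrow> ('a \<Rightarrow> real) \<Rightarrow> real" where
  "cov M f g = expect M (\<lambda>y. (f y - expect M f) * (g y - expect M g))"

definition var :: "('a measure) \<Rightarrow> ('a \<Rightarrow> real) \<Rightarrow> real" where
  "var M f = expect M (\<lambda>y. (f y - expect M f)^2)"

definition in_F20 :: "real^'k^'n \<Rightarrow> (real^'n) measure \<Rightarrow> real^'k \<Rightarrow> bool" where
  "in_F20 X M b \<longleftrightarrow> prob_space M \<and> sets M = sets borel \<and>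
     (\<exists>\<sigma>2::real. 0 < \<sigma>2 \<and>
        (\<forall>i. integrable M (\<lambda>y. (y - X *v b) $ i) \<and> expect M (\<lambda>y. (y - X *v b) $ i) = 0) \<and>
        (\<forall>i j. integrable M (\<lambda>y. (y - X *v b) $ i * (y - X *v b) $ j) \<and>
               expect M (\<lambda>y. (y - X *v b) $ i * (y - X *v b) $ j) = (if i = j then \<sigma>2 else 0)))"

definition fourth_moments :: "(real^'n) measure \<Rightarrow> bool" where
  "fourth_moments M \<longleftrightarrow> (\<forall>i. integrable M (\<lambda>y. (y $ i) ^ 4))"

definition ols :: "real^'k^'n \<Rightarrow> real^'n \<Rightarrow> real^'k" where
  "ols X y = matrix_inv (transpose X ** X) *v (transpose X *v y)"

definition quadvec :: "('k \<Rightarrow> real^'n^'n) \<Rightarrow> real^'n \<Rightarrow> real^'k" where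
  "quadvec H y = (\<chi> i. y \<bullet> (H i *v y))"

definition est_alpha :: "real^'k^'n \<Rightarrow> ('k \<Rightarrow> real^'n^'n) \<Rightarrow> real \<Rightarrow> real^'n \<Rightarrow> real^'k" where
  "est_alpha X H \<alpha> y = ols X y + \<alpha> *\<^sub>R quadvec H y"

end

theory Submission
  imports Defs
begin

(*
  The OLS estimator is linear in Y and reproduces beta, while
  E(Y' H_i Y) = beta' X' H_i X beta + sigma^2 tr H_i = 0; hence every beta_alpha is unbiased.
  The variance of c' beta_alpha is the quadratic
  Var(c' beta_OLS) + 2 alpha Cov(c' beta_OLS, c' Q) + alpha^2 Var(c' Q) in alpha, which drops
  below its value at alpha = 0 as soon as the linear coefficient is nonzero.  Finally
  c' beta_OLS = d' Y and c' Q = Y' K Y with K = sum_i c_i H_i, so for beta = 0 the covariance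
  is E((d' Y)(Y' K Y)), a combination of third moments of Y; under independence with zero means
  only the diagonal terms E(e_j^3) survive.  Finite fourth moments make all these linear and
  quadratic forms square integrable.
*)

section \<open>Square-integrable functions\<close>

definition square_integrable :: "'a measure \<Rightarrow> ('a \<Rightarrow> real) \<Rightarrow> bool" where
  "square_integrable M f \<longleftrightarrow> f \<in> borel_measurable M \<and> integrable M (\<lambda>x. (f x)\<^sup>2)"

lemma integrable_mult_square_integrable:
  assumes "square_integrable M f" "square_integrable M g"
  shows "integrable M (\<lambda>x. f x * g x)"
proof (rule Bochner_Integration.integrable_bound)
  show "integrable M (\<lambda>x. (f x)\<^sup>2 + (g x)\<^sup>2)"
    using assms unfolding square_integrable_def by auto
  show "(\<lambda>x. f x * g x) \<in> borel_measurable M"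
    using assms unfolding square_integrable_def by auto
  have "\<bar>a * b\<bar> \<le> a\<^sup>2 + b\<^sup>2" for a b :: real
  proof -
    have "2 * \<bar>a * b\<bar> \<le> a\<^sup>2 + b\<^sup>2"
      using sum_squares_bound[of "\<bar>a\<bar>" "\<bar>b\<bar>"] by (simp add: abs_mult mult.assoc)
    then show ?thesis
      using abs_ge_zero[of "a * b"] by linarith
  qed
  then show "AE x in M. norm (f x * g x) \<le> norm ((f x)\<^sup>2 + (g x)\<^sup>2)"
    by simp
qed

lemma (in finite_measure) square_integrable_integrable:
  "square_integrable M f \<Longrightarrow> integrable M f"
  unfolding square_integrable_def by (blast intro: square_integrable_imp_integrable)

lemma (in finite_measure) square_integrable_const: "square_integrable M (\<lambda>x. c)"
  unfolding square_integrable_def by simp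

lemma square_integrable_add:
  assumes "square_integrable M f" "square_integrable M g"
  shows "square_integrable M (\<lambda>x. f x + g x)"
proof -
  have "(\<lambda>x. (f x + g x)\<^sup>2) = (\<lambda>x. (f x)\<^sup>2 + 2 * (f x * g x) + (g x)\<^sup>2)"
    by (simp add: power2_sum algebra_simps)
  then show ?thesis
    using assms integrable_mult_square_integrable[OF assms]
    unfolding square_integrable_def by auto
qed

lemma square_integrable_mult_const:
  "square_integrable M f \<Longrightarrow> square_integrable M (\<lambda>x. c * f x)"
  unfolding square_integrable_def by (auto simp: power_mult_distrib)

lemma square_integrable_sum:
  "finite I \<Longrightarrow> (\<And>i. i \<in> I \<Longrightarrow> square_integrable M (f i)) \<Longrightarrow>
    square_integrable M (\<lambda>x. \<Sum>i\<in>I. f i x)"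
proof (induction I rule: finite_induct)
  case empty
  then show ?case by (simp add: square_integrable_def)
next
  case (insert i I)
  then show ?case by (simp add: square_integrable_add)
qed

lemma square_integrable_mult:
  assumes "square_integrable M (\<lambda>x. (f x)\<^sup>2)" "square_integrable M (\<lambda>x. (g x)\<^sup>2)"
    "f \<in> borel_measurable M" "g \<in> borel_measurable M"
  shows "square_integrable M (\<lambda>x. f x * g x)"
  using integrable_mult_square_integrable[OF assms(1,2)] assms(3,4)
  unfolding square_integrable_def by (simp add: power_mult_distrib)

section \<open>Variance and covariance\<close>

lemma (in finite_measure) square_integrable_centered:
  "square_integrable M f \<Longrightarrow> square_integrable M (\<lambda>x. f x - c)"
  using square_integrable_add[of M f "\<lambda>_. - c"] square_integrable_const by simp

lemma (in prob_space) var_add_scaled: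
  assumes f: "square_integrable M f" and g: "square_integrable M g"
  shows "var M (\<lambda>x. f x + \<alpha> * g x) = var M f + 2 * \<alpha> * cov M f g + \<alpha>\<^sup>2 * var M g"
proof -
  define f0 where "f0 x = f x - expect M f" for x
  define g0 where "g0 x = g x - expect M g" for x
  have f0: "square_integrable M f0" and g0: "square_integrable M g0"
    unfolding f0_def g0_def using f g by (simp_all add: square_integrable_centered)
  have "expect M (\<lambda>x. f x + \<alpha> * g x) = expect M f + \<alpha> * expect M g"
    using f g unfolding expect_def by (simp add: square_integrable_integrable)
  then have "(\<lambda>x. (f x + \<alpha> * g x - expect M (\<lambda>x. f x + \<alpha> * g x))\<^sup>2)
      = (\<lambda>x. (f0 x)\<^sup>2 + (2 * \<alpha>) * (f0 x * g0 x) + \<alpha>\<^sup>2 * (g0 x)\<^sup>2)"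
    by (simp add: f0_def g0_def power2_eq_square algebra_simps)
  moreover have "integrable M (\<lambda>x. (f0 x)\<^sup>2)" "integrable M (\<lambda>x. f0 x * g0 x)"
    "integrable M (\<lambda>x. (g0 x)\<^sup>2)"
    using f0 g0 integrable_mult_square_integrable unfolding square_integrable_def by auto
  moreover have "var M f = expect M (\<lambda>x. (f0 x)\<^sup>2)" "cov M f g = expect M (\<lambda>x. f0 x * g0 x)"
    "var M g = expect M (\<lambda>x. (g0 x)\<^sup>2)"
    by (simp_all add: var_def cov_def f0_def g0_def)
  ultimately show ?thesis
    by (simp add: var_def expect_def)
qed

lemma (in prob_space) exists_var_add_scaled_less:
  assumes f: "square_integrable M f" and g: "square_integrable M g" and "cov M f g \<noteq> 0"
  shows "\<exists>\<alpha>. var M (\<lambda>x. f x + \<alpha> * g x) < var M f"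
proof -
  define C where "C = cov M f g"
  define V where "V = var M g"
  \<comment> \<open>the variance changes by \<open>2 \<alpha> C + \<alpha>\<^sup>2 V\<close>; dividing by \<open>V + 1\<close> instead of \<open>V\<close> also covers \<open>V = 0\<close>\<close>
  define \<alpha> where "\<alpha> = - C / (V + 1)"
  have "0 \<le> V"
    unfolding V_def var_def expect_def by (rule integral_nonneg_AE) simp
  have C_eq: "C = - \<alpha> * (V + 1)"
    using \<open>0 \<le> V\<close> by (simp add: \<alpha>_def)
  have "\<alpha> \<noteq> 0"
    using assms(3) \<open>0 \<le> V\<close> by (simp add: \<alpha>_def C_def)
  have "2 * \<alpha> * C + \<alpha>\<^sup>2 * V = - (\<alpha>\<^sup>2 * (V + 2))"
    unfolding C_eq by (simp add: power2_eq_square algebra_simps)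
  also have "\<dots> < 0"
    using \<open>0 \<le> V\<close> \<open>\<alpha> \<noteq> 0\<close> by (simp add: add_nonneg_pos)
  finally show ?thesis
    using var_add_scaled[OF f g] unfolding C_def V_def by auto
qed

lemma (in prob_space) cov_mean_zero:
  assumes "square_integrable M f" "square_integrable M g" "expect M f = 0"
  shows "cov M f g = expect M (\<lambda>x. f x * g x)"
proof -
  have "(\<lambda>x. f x * (g x - expect M g)) = (\<lambda>x. f x * g x - expect M g * f x)"
    by (simp add: algebra_simps)
  then show ?thesis
    using assms integrable_mult_square_integrable[OF assms(1,2)]
    unfolding cov_def expect_def by (simp add: square_integrable_integrable)
qed

lemma (in prob_space) expect_triple_product_indep:
  fixes Z :: "'i \<Rightarrow> 'a \<Rightarrow> real"
  assumes indep: "indep_vars (\<lambda>_. borel) Z UNIV"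
    and sq: "\<And>i. square_integrable M (Z i)" and mean0: "\<And>i. expect M (Z i) = 0"
  shows "expect M (\<lambda>x. Z j x * Z l x * Z m x) = (if j = l \<and> l = m then expect M (\<lambda>x. Z j x ^ 3) else 0)"
proof -
  have int: "integrable M (Z i)" "integrable M (\<lambda>x. (Z i x)\<^sup>2)" for i
    using square_integrable_integrable[OF sq] sq[unfolded square_integrable_def] by auto
  have square_times: "expect M (\<lambda>x. (Z a x)\<^sup>2 * Z b x) = 0" if "a \<noteq> b" for a b
  proof -
    define \<phi> where "\<phi> i = (if i = a then (\<lambda>t::real. t\<^sup>2) else (\<lambda>t. t))" for i
    have "indep_vars (\<lambda>_. borel) (\<lambda>i x. \<phi> i (Z i x)) {a, b}"
      by (rule indep_vars_subset[OF indep_vars_compose2[OF indep]]) (auto simp: \<phi>_def)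
    then have "(\<integral>x. (\<Prod>i\<in>{a, b}. \<phi> i (Z i x)) \<partial>M) = (\<Prod>i\<in>{a, b}. \<integral>x. \<phi> i (Z i x) \<partial>M)"
      by (rule indep_vars_lebesgue_integral[rotated]) (auto simp: \<phi>_def int)
    then show ?thesis
      using that mean0[of b] by (simp add: \<phi>_def expect_def)
  qed
  consider "j = l" "l = m" | "j = l" "l \<noteq> m" | "j = m" "l \<noteq> m" | "l = m" "j \<noteq> l"
    | "j \<noteq> l" "l \<noteq> m" "j \<noteq> m"
    by blast
  then show ?thesis
  proof cases
    case 1
    then show ?thesis by (simp add: power3_eq_cube)
  next
    case 2
    then show ?thesis using square_times[of j m] by (simp add: power2_eq_square)
  next
    case 3
    then show ?thesis using square_times[of j l] by (simp add: power2_eq_square mult_ac)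
  next
    case 4
    then show ?thesis using square_times[of l j] by (simp add: power2_eq_square mult_ac)
  next
    case 5
    have "indep_vars (\<lambda>_. borel) Z {j, l, m}"
      by (rule indep_vars_subset[OF indep]) auto
    then have "(\<integral>x. (\<Prod>i\<in>{j, l, m}. Z i x) \<partial>M) = (\<Prod>i\<in>{j, l, m}. \<integral>x. Z i x \<partial>M)"
      by (rule indep_vars_lebesgue_integral[rotated]) (auto simp: int)
    then show ?thesis
      using 5 mean0[of j] by (simp add: expect_def mult_ac)
  qed
qed

section \<open>Linear and quadratic forms of a random vector\<close>

lemma quadratic_form_eq:
  fixes y :: "real^'n"
  shows "y \<bullet> (K *v y) = (\<Sum>l\<in>UNIV. \<Sum>m\<in>UNIV. K $ l $ m * (y $ l * y $ m))"
  by (simp add: inner_vec_def matrix_vector_mult_def sum_distrib_left mult_ac)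

lemma double_sum_diagonal:
  fixes g :: "'n::finite \<Rightarrow> 'n \<Rightarrow> 'a::semiring_0"
  shows "(\<Sum>l\<in>UNIV. \<Sum>m\<in>UNIV. g l m * (if j = l \<and> l = m then a else 0)) = g j j * a"
proof -
  have "(j = l \<and> l = m) \<longleftrightarrow> (m = j \<and> l = j)" for l m
    by auto
  then show ?thesis
    by (simp add: if_distrib[of "(*) _"] if_if_eq_conj[symmetric] cong: if_cong)
qed

lemma square_integrable_linear_form:
  fixes w :: "real^'n"
  assumes "\<And>j. square_integrable M (\<lambda>y. y $ j)"
  shows "square_integrable M (\<lambda>y. w \<bullet> y)"
  unfolding inner_vec_def inner_real_def
  by (intro square_integrable_sum square_integrable_mult_const assms finite)

lemma square_integrable_quadratic_form:
  fixes K :: "real^'n^'n"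
  assumes "\<And>l m. square_integrable M (\<lambda>y. y $ l * y $ m)"
  shows "square_integrable M (\<lambda>y. y \<bullet> (K *v y))"
  unfolding quadratic_form_eq
  by (intro square_integrable_sum square_integrable_mult_const assms finite)

lemma has_bochner_integral_linear_form:
  fixes v w :: "real^'n"
  assumes "\<And>j. has_bochner_integral M (\<lambda>y. y $ j) (v $ j)"
  shows "has_bochner_integral M (\<lambda>y. w \<bullet> y) (w \<bullet> v)"
  unfolding inner_vec_def
  by (intro has_bochner_integral_sum) (simp add: inner_real_def has_bochner_integral_mult_right assms)

lemma has_bochner_integral_quadratic_form:
  fixes v :: "real^'n" and B :: "real^'n^'n"
  assumes "\<And>l m. has_bochner_integral M (\<lambda>y. y $ l * y $ m) (v $ l * v $ m + (if l = m then \<sigma>2 else 0))"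
  shows "has_bochner_integral M (\<lambda>y. y \<bullet> (B *v y)) (v \<bullet> (B *v v) + \<sigma>2 * trace B)"
proof -
  have "has_bochner_integral M (\<lambda>y. y \<bullet> (B *v y))
      (\<Sum>l\<in>UNIV. \<Sum>m\<in>UNIV. B $ l $ m * (v $ l * v $ m + (if l = m then \<sigma>2 else 0)))"
    unfolding quadratic_form_eq
    by (intro has_bochner_integral_sum has_bochner_integral_mult_right assms)
  also have "(\<Sum>l\<in>UNIV. \<Sum>m\<in>UNIV. B $ l $ m * (v $ l * v $ m + (if l = m then \<sigma>2 else 0)))
      = v \<bullet> (B *v v) + \<sigma>2 * trace B"
  proof -
    have "(\<Sum>m\<in>UNIV. B $ l $ m * (if l = m then \<sigma>2 else 0)) = \<sigma>2 * B $ l $ l" for l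
      by (simp add: if_distrib[of "(*) _"] mult.commute cong: if_cong)
    then show ?thesis
      by (simp add: quadratic_form_eq distrib_left sum.distrib trace_def sum_distrib_left)
  qed
  finally show ?thesis .
qed

lemma has_bochner_integral_vec:
  fixes f :: "'a \<Rightarrow> real^'n"
  assumes "\<And>i. has_bochner_integral M (\<lambda>x. f x $ i) (c $ i)"
  shows "has_bochner_integral M f c"
proof -
  have expand: "(\<Sum>i\<in>UNIV. (x $ i) *\<^sub>R axis i 1) = x" for x :: "real^'n"
    by (simp add: vec_eq_iff axis_def if_distrib cong: if_cong)
  have "has_bochner_integral M (\<lambda>x. \<Sum>i\<in>UNIV. (f x $ i) *\<^sub>R axis i (1::real)) (\<Sum>i\<in>UNIV. (c $ i) *\<^sub>R axis i 1)"
    by (intro has_bochner_integral_sum has_bochner_integral_scaleR_left assms)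
  then show ?thesis
    unfolding expand .
qed

lemma expect_linear_form_mult_quadratic_form:
  fixes M :: "(real^'n) measure" and d :: "real^'n" and K :: "real^'n^'n"
  assumes "\<And>j. square_integrable M (\<lambda>y. y $ j)" "\<And>l m. square_integrable M (\<lambda>y. y $ l * y $ m)"
  shows "expect M (\<lambda>y. (d \<bullet> y) * (y \<bullet> (K *v y)))
    = (\<Sum>j\<in>UNIV. \<Sum>l\<in>UNIV. \<Sum>m\<in>UNIV. d $ j * K $ l $ m * expect M (\<lambda>y. y $ j * y $ l * y $ m))"
proof -
  have expand: "(d \<bullet> y) * (y \<bullet> (K *v y))
      = (\<Sum>j\<in>UNIV. \<Sum>l\<in>UNIV. \<Sum>m\<in>UNIV. d $ j * K $ l $ m * (y $ j * y $ l * y $ m))" for y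
    unfolding inner_vec_def[of d] inner_real_def quadratic_form_eq sum_product
    by (simp add: sum_distrib_left mult_ac)
  have "integrable M (\<lambda>y. y $ j * y $ l * y $ m)" for j l m
    using integrable_mult_square_integrable[OF assms(2) assms(1)] .
  then show ?thesis
    unfolding expand expect_def by simp
qed

lemma fourth_moments_square_integrable:
  fixes M :: "(real^'n) measure"
  assumes "prob_space M" "sets M = sets borel" "fourth_moments M"
  shows "square_integrable M (\<lambda>y. y $ j)" "square_integrable M (\<lambda>y. y $ l * y $ m)"
proof -
  interpret prob_space M by fact
  have meas: "(\<lambda>y. y $ i) \<in> borel_measurable M" for i
    unfolding measurable_cong_sets[OF assms(2) refl] by measurable
  have sq: "square_integrable M (\<lambda>y. (y $ i)\<^sup>2)" for i
    using assms(3) meas unfolding fourth_moments_def square_integrable_def by simp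
  show "square_integrable M (\<lambda>y. y $ j)"
    using square_integrable_integrable[OF sq] meas unfolding square_integrable_def by simp
  show "square_integrable M (\<lambda>y. y $ l * y $ m)"
    by (rule square_integrable_mult[OF sq sq meas meas])
qed

section \<open>Least squares\<close>

lemma inner_matrix_vector_transpose:
  fixes A :: "real^'n^'m"
  shows "x \<bullet> (A *v y) = (transpose A *v x) \<bullet> y"
  by (simp add: dot_lmul_matrix)

lemma matrix_inv_inverse:
  fixes A :: "'a::semiring_1^'n^'n"
  assumes "invertible A"
  shows "A ** matrix_inv A = mat 1" "matrix_inv A ** A = mat 1"
  using someI_ex[OF assms[unfolded invertible_def]] unfolding matrix_inv_def by auto

lemma transpose_matrix_inv_symmetric:
  fixes A :: "real^'n^'n"
  assumes "invertible A" "transpose A = A"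
  shows "transpose (matrix_inv A) = matrix_inv A"
proof -
  have "transpose (matrix_inv A) ** A = transpose (A ** matrix_inv A)"
    by (simp add: matrix_transpose_mul assms(2))
  then have left_inv: "transpose (matrix_inv A) ** A = mat 1"
    by (simp add: matrix_inv_inverse[OF assms(1)] transpose_mat)
  have "transpose (matrix_inv A) = transpose (matrix_inv A) ** (A ** matrix_inv A)"
    by (simp add: matrix_inv_inverse[OF assms(1)])
  also have "\<dots> = matrix_inv A"
    by (simp add: matrix_mul_assoc left_inv)
  finally show ?thesis .
qed

lemma invertible_gram_matrix:
  fixes X :: "real^'k^'n"
  assumes "rank X = CARD('k)"
  shows "invertible (transpose X ** X)"
proof -
  have "x = 0" if "(transpose X ** X) *v x = 0" for x
  proof -
    have "(X *v x) \<bullet> (X *v x) = x \<bullet> ((transpose X ** X) *v x)"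
      by (simp add: inner_matrix_vector_transpose matrix_vector_mul_assoc[symmetric] inner_commute)
    then have "X *v x = X *v 0"
      using that by simp
    then show "x = 0"
      using assms full_rank_injective by (metis injD)
  qed
  then obtain B where "B ** (transpose X ** X) = mat 1"
    using matrix_left_invertible_ker by blast
  then show ?thesis
    unfolding invertible_def using matrix_left_right_inverse by blast
qed

lemma quadratic_form_vanishes_on_range:
  fixes X :: "real^'k^'n" and B :: "real^'n^'n"
  assumes "transpose X ** B ** X = 0"
  shows "(X *v b) \<bullet> (B *v (X *v b)) = 0"
proof -
  have "(X *v b) \<bullet> (B *v (X *v b)) = (B *v (X *v b)) \<bullet> (X *v b)"
    by (rule inner_commute)
  also have "\<dots> = (transpose X *v (B *v (X *v b))) \<bullet> b"
    by (rule inner_matrix_vector_transpose)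
  also have "\<dots> = ((transpose X ** B ** X) *v b) \<bullet> b"
    by (simp add: matrix_vector_mul_assoc matrix_mul_assoc)
  finally show ?thesis
    by (simp add: assms)
qed

lemma ols_left_inverse:
  fixes X :: "real^'k^'n"
  assumes "rank X = CARD('k)"
  shows "ols X (X *v b) = b"
  unfolding ols_def matrix_vector_mul_assoc
  by (simp add: matrix_inv_inverse(2)[OF invertible_gram_matrix[OF assms]])

lemma inner_ols:
  fixes X :: "real^'k^'n"
  assumes "rank X = CARD('k)"
  shows "c \<bullet> ols X y = (X *v (matrix_inv (transpose X ** X) *v c)) \<bullet> y"
proof -
  let ?S = "matrix_inv (transpose X ** X)"
  have sym: "transpose ?S = ?S"
    by (simp add: transpose_matrix_inv_symmetric invertible_gram_matrix[OF assms] matrix_transpose_mul)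
  have "c \<bullet> ols X y = (?S *v c) \<bullet> (transpose X *v y)"
    unfolding ols_def inner_matrix_vector_transpose[of c] sym ..
  also have "\<dots> = (X *v (?S *v c)) \<bullet> y"
    by (simp add: inner_matrix_vector_transpose[of y X] inner_commute)
  finally show ?thesis .
qed

lemma inner_quadvec:
  "c \<bullet> quadvec H y = y \<bullet> ((\<Sum>i\<in>UNIV. c $ i *\<^sub>R H i) *v y)"
proof -
  have "c \<bullet> quadvec H y = (\<Sum>i\<in>UNIV. \<Sum>l\<in>UNIV. \<Sum>m\<in>UNIV. c $ i * H i $ l $ m * (y $ l * y $ m))"
    unfolding quadvec_def inner_vec_def[of c] by (simp add: quadratic_form_eq sum_distrib_left mult.assoc)
  also have "\<dots> = (\<Sum>l\<in>UNIV. \<Sum>m\<in>UNIV. \<Sum>i\<in>UNIV. c $ i * H i $ l $ m * (y $ l * y $ m))"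
    by (subst sum.swap, rule sum.cong[OF refl], rule sum.swap)
  also have "\<dots> = y \<bullet> ((\<Sum>i\<in>UNIV. c $ i *\<^sub>R H i) *v y)"
    by (simp add: quadratic_form_eq sum_distrib_right)
  finally show ?thesis .
qed

section \<open>The estimators under the model\<close>

lemma in_F20_moments:
  fixes X :: "real^'k^'n"
  assumes "in_F20 X M b"
  obtains \<sigma>2 where "prob_space M" "sets M = sets borel"
    "\<And>j. has_bochner_integral M (\<lambda>y. y $ j) ((X *v b) $ j)"
    "\<And>l m. has_bochner_integral M (\<lambda>y. y $ l * y $ m)
       ((X *v b) $ l * (X *v b) $ m + (if l = m then \<sigma>2 else 0))"
proof -
  define v where "v = X *v b"
  from assms obtain \<sigma>2 where ps: "prob_space M" and sets: "sets M = sets borel"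
    and e1: "\<And>i. has_bochner_integral M (\<lambda>y. (y - v) $ i) 0"
    and e2: "\<And>l m. has_bochner_integral M (\<lambda>y. (y - v) $ l * (y - v) $ m) (if l = m then \<sigma>2 else 0)"
    unfolding in_F20_def v_def has_bochner_integral_iff expect_def by blast
  interpret prob_space M by fact
  have const: "has_bochner_integral M (\<lambda>_. c) c" for c :: real
    by (simp add: has_bochner_integral_iff prob_space)
  have "has_bochner_integral M (\<lambda>y. v $ j + (y - v) $ j) (v $ j + 0)" for j
    by (intro has_bochner_integral_add const e1)
  then have mean: "has_bochner_integral M (\<lambda>y. y $ j) (v $ j)" for j
    by simp
  have "has_bochner_integral M
      (\<lambda>y. v $ l * v $ m + (v $ l * (y - v) $ m + v $ m * (y - v) $ l) + (y - v) $ l * (y - v) $ m)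
      (v $ l * v $ m + (v $ l * 0 + v $ m * 0) + (if l = m then \<sigma>2 else 0))" for l m
    by (intro has_bochner_integral_add has_bochner_integral_mult_right const e1 e2)
  then have "has_bochner_integral M (\<lambda>y. y $ l * y $ m) (v $ l * v $ m + (if l = m then \<sigma>2 else 0))"
    for l m
    by (simp add: algebra_simps)
  with ps sets mean show ?thesis
    using that unfolding v_def by blast
qed

lemma est_alpha_unbiased:
  fixes X :: "real^'k^'n" and H :: "'k \<Rightarrow> real^'n^'n"
  assumes rank: "rank X = CARD('k)" and trace: "\<And>i. trace (H i) = 0"
    and HX: "\<And>i. transpose X ** H i ** X = 0" and F: "in_F20 X M b"
  shows "has_bochner_integral M (est_alpha X H \<alpha>) b"
proof (rule has_bochner_integral_vec)
  fix i
  obtain \<sigma>2 where mean: "\<And>j. has_bochner_integral M (\<lambda>y. y $ j) ((X *v b) $ j)"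
    and second: "\<And>l m. has_bochner_integral M (\<lambda>y. y $ l * y $ m)
       ((X *v b) $ l * (X *v b) $ m + (if l = m then \<sigma>2 else 0))"
    using in_F20_moments[OF F] by metis
  define A where "A = matrix_inv (transpose X ** X) ** transpose X"
  have "A *v (X *v b) = b"
    using ols_left_inverse[OF rank, of b]
    unfolding ols_def A_def matrix_vector_mul_assoc matrix_mul_assoc .
  then have A_row: "A $ i \<bullet> (X *v b) = b $ i"
    by (metis matrix_vector_mul_component)
  have component: "est_alpha X H \<alpha> y $ i = A $ i \<bullet> y + \<alpha> * (y \<bullet> (H i *v y))" for y
    unfolding est_alpha_def ols_def quadvec_def matrix_vector_mul_assoc A_def[symmetric]
    by (simp add: matrix_vector_mul_component)
  have "has_bochner_integral M (\<lambda>y. A $ i \<bullet> y + \<alpha> * (y \<bullet> (H i *v y)))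
      (A $ i \<bullet> (X *v b) + \<alpha> * ((X *v b) \<bullet> (H i *v (X *v b)) + \<sigma>2 * trace (H i)))"
    by (intro has_bochner_integral_add has_bochner_integral_mult_right
        has_bochner_integral_linear_form has_bochner_integral_quadratic_form mean second)
  then show "has_bochner_integral M (\<lambda>y. est_alpha X H \<alpha> y $ i) (b $ i)"
    by (simp add: component A_row trace quadratic_form_vanishes_on_range[OF HX])
qed

lemma fourth_moments_square_integrable_ols_quadvec:
  fixes M :: "(real^'n) measure" and X :: "real^'k^'n"
  assumes "prob_space M" "sets M = sets borel" "fourth_moments M"
  shows "square_integrable M (\<lambda>y. c \<bullet> ols X y)" "square_integrable M (\<lambda>y. c \<bullet> quadvec H y)"
proof -
  note coords = fourth_moments_square_integrable[OF assms]
  have "(\<lambda>y. c \<bullet> ols X y) = (\<lambda>y. (transpose (matrix_inv (transpose X ** X) ** transpose X) *v c) \<bullet> y)"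
    unfolding ols_def matrix_vector_mul_assoc inner_matrix_vector_transpose ..
  then show "square_integrable M (\<lambda>y. c \<bullet> ols X y)"
    using square_integrable_linear_form[OF coords(1)] by simp
  show "square_integrable M (\<lambda>y. c \<bullet> quadvec H y)"
    unfolding inner_quadvec by (rule square_integrable_quadratic_form[OF coords(2)])
qed

lemma var_est_alpha_less:
  fixes X :: "real^'k^'n" and H :: "'k \<Rightarrow> real^'n^'n"
  assumes F: "in_F20 X M b" and fm: "fourth_moments M"
    and cov: "cov M (\<lambda>y. c \<bullet> ols X y) (\<lambda>y. c \<bullet> quadvec H y) \<noteq> 0"
  shows "\<exists>\<alpha>. var M (\<lambda>y. c \<bullet> est_alpha X H \<alpha> y) < var M (\<lambda>y. c \<bullet> ols X y)"
proof -
  obtain ps: "prob_space M" and sets: "sets M = sets borel"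
    using in_F20_moments[OF F] by metis
  have "(\<lambda>y. c \<bullet> est_alpha X H \<alpha> y) = (\<lambda>y. c \<bullet> ols X y + \<alpha> * (c \<bullet> quadvec H y))" for \<alpha>
    by (simp add: est_alpha_def inner_add_right)
  then show ?thesis
    using prob_space.exists_var_add_scaled_less[OF ps
        fourth_moments_square_integrable_ols_quadvec[OF ps sets fm] cov]
    by simp
qed

lemma cov_ols_quadvec:
  fixes X :: "real^'k^'n" and H :: "'k \<Rightarrow> real^'n^'n"
  assumes rank: "rank X = CARD('k)" and F: "in_F20 X M 0" and fm: "fourth_moments M"
  shows "cov M (\<lambda>y. c \<bullet> ols X y) (\<lambda>y. c \<bullet> quadvec H y) =
    (\<Sum>j\<in>UNIV. \<Sum>l\<in>UNIV. \<Sum>m\<in>UNIV. (X *v (matrix_inv (transpose X ** X) *v c)) $ j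
       * (\<Sum>i\<in>UNIV. c $ i * H i $ l $ m) * expect M (\<lambda>y. y $ j * y $ l * y $ m))"
proof -
  obtain ps: "prob_space M" and sets: "sets M = sets borel"
    and mean: "\<And>j. has_bochner_integral M (\<lambda>y. y $ j) 0"
    using in_F20_moments[OF F] by (metis matrix_vector_mult_0_right zero_index)
  define d where "d = X *v (matrix_inv (transpose X ** X) *v c)"
  define K where "K = (\<Sum>i\<in>UNIV. c $ i *\<^sub>R H i)"
  note coords = fourth_moments_square_integrable[OF ps sets fm]
  have "(\<lambda>y. c \<bullet> ols X y) = (\<lambda>y. d \<bullet> y)" "(\<lambda>y. c \<bullet> quadvec H y) = (\<lambda>y. y \<bullet> (K *v y))"
    by (simp_all add: inner_ols[OF rank] inner_quadvec d_def K_def)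
  then have "cov M (\<lambda>y. c \<bullet> ols X y) (\<lambda>y. c \<bullet> quadvec H y) = cov M (\<lambda>y. d \<bullet> y) (\<lambda>y. y \<bullet> (K *v y))"
    by simp
  also have "\<dots> = expect M (\<lambda>y. (d \<bullet> y) * (y \<bullet> (K *v y)))"
  proof (rule prob_space.cov_mean_zero[OF ps])
    show "square_integrable M (\<lambda>y. d \<bullet> y)" "square_integrable M (\<lambda>y. y \<bullet> (K *v y))"
      by (rule square_integrable_linear_form[OF coords(1)] square_integrable_quadratic_form[OF coords(2)])+
    show "expect M (\<lambda>y. d \<bullet> y) = 0"
      using has_bochner_integral_linear_form[of M 0 d] mean
      by (simp add: has_bochner_integral_iff expect_def)
  qed
  also have "\<dots> = (\<Sum>j\<in>UNIV. \<Sum>l\<in>UNIV. \<Sum>m\<in>UNIV. d $ j * K $ l $ m * expect M (\<lambda>y. y $ j * y $ l * y $ m))"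
    by (rule expect_linear_form_mult_quadratic_form[OF coords])
  finally show ?thesis
    by (simp add: d_def K_def)
qed

lemma cov_ols_quadvec_indep:
  fixes X :: "real^'k^'n" and H :: "'k \<Rightarrow> real^'n^'n"
  assumes rank: "rank X = CARD('k)" and F: "in_F20 X M 0" and fm: "fourth_moments M"
    and indep: "prob_space.indep_vars M (\<lambda>_. borel) (\<lambda>j y. y $ j) UNIV"
  shows "cov M (\<lambda>y. c \<bullet> ols X y) (\<lambda>y. c \<bullet> quadvec H y) =
    (\<Sum>j\<in>UNIV. (X *v (matrix_inv (transpose X ** X) *v c)) $ j
       * (\<Sum>i\<in>UNIV. c $ i * H i $ j $ j) * expect M (\<lambda>y. (y $ j) ^ 3))"
proof -
  obtain ps: "prob_space M" and sets: "sets M = sets borel"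
    and mean: "\<And>j. has_bochner_integral M (\<lambda>y. y $ j) 0"
    using in_F20_moments[OF F] by (metis matrix_vector_mult_0_right zero_index)
  have "expect M (\<lambda>y. y $ j) = 0" for j
    using mean by (simp add: has_bochner_integral_iff expect_def)
  note triple = prob_space.expect_triple_product_indep[OF ps indep
      fourth_moments_square_integrable(1)[OF ps sets fm] this]
  show ?thesis
    unfolding cov_ols_quadvec[OF rank F fm] triple by (simp only: double_sum_diagonal)
qed

theorem lemmaA1:
  fixes X :: "real^'k^'n" and H :: "'k \<Rightarrow> real^'n^'n"
  assumes kn: "CARD('k) < CARD('n)"
    and rankX: "rank X = CARD('k)"
    and Hsym: "\<And>i. transpose (H i) = H i"
    and Htr: "\<And>i. trace (H i) = 0"
    and HX: "\<And>i. transpose X ** H i ** X = 0"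
  shows
   "(\<forall>M b \<alpha>. in_F20 X M b \<longrightarrow>
        integrable M (est_alpha X H \<alpha>) \<and> (\<integral>y. est_alpha X H \<alpha> y \<partial>M) = b)
  \<and> (\<forall>M b c. in_F20 X M b \<and> fourth_moments M \<and>
        cov M (\<lambda>y. c \<bullet> ols X y) (\<lambda>y. c \<bullet> quadvec H y) \<noteq> 0 \<longrightarrow>
        (\<exists>\<alpha>. var M (\<lambda>y. c \<bullet> est_alpha X H \<alpha> y) < var M (\<lambda>y. c \<bullet> ols X y)))
  \<and> (\<forall>M c. in_F20 X M 0 \<and> fourth_moments M \<longrightarrow>
        (let d = X *v (matrix_inv (transpose X ** X) *v c) in
         cov M (\<lambda>y. c \<bullet> ols X y) (\<lambda>y. c \<bullet> quadvec H y) =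
         (\<Sum>j\<in>UNIV. \<Sum>l\<in>UNIV. \<Sum>m\<in>UNIV.
            d $ j * (\<Sum>i\<in>UNIV. c $ i * H i $ l $ m) * expect M (\<lambda>y. y $ j * y $ l * y $ m))))
  \<and> (\<forall>M c. in_F20 X M 0 \<and> fourth_moments M \<and>
        prob_space.indep_vars M (\<lambda>_. borel) (\<lambda>j y. y $ j) UNIV \<longrightarrow>
        (let d = X *v (matrix_inv (transpose X ** X) *v c) in
         cov M (\<lambda>y. c \<bullet> ols X y) (\<lambda>y. c \<bullet> quadvec H y) =
         (\<Sum>j\<in>UNIV. d $ j * (\<Sum>i\<in>UNIV. c $ i * H i $ j $ j) * expect M (\<lambda>y. (y $ j) ^ 3))))"
  unfolding Let_def
  using est_alpha_unbiased[OF rankX Htr HX] var_est_alpha_less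
    cov_ols_quadvec[OF rankX] cov_ols_quadvec_indep[OF rankX]
  by (auto simp: has_bochner_integral_iff)

end
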